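(* For $n_1=2k_1>0$ and $n_2=2k_2+1>0$, $$s_{n_1+n_2}\bigl[\widetilde L(n_1,n_2)\bigr]=\sum_{j=1}^{n_1}(-1)^j\binom{n_1+n_2}{j}=-\binom{n_1+n_2}{1}+\binom{n_1+n_2}{2}-\cdots-\binom{n_1+n_2}{n_1-1}+\binom{n_1+n_2}{n_1}.$$
   Context: Let $\eta$ be the tautological line bundle over $\mathbb CP^{n_1}$, let $p\colon L(n_1,n_2)=\mathbb CP(\eta\oplus\underline{\mathbb C}^{n_2})\to\mathbb CP^{n_1}$ be the projectivisation and $\gamma$ its tautological line bundle. For $n_1=2k_1$, $n_2=2k_2+1$, $\widetilde L(n_1,n_2)$ denotes the manifold $L(n_1,n_2)$ with the stably complex structure defined by the real bundle isomorphism $$\mathcal TL(n_1,n_2)\oplus\underline{\mathbb R}^4\cong (p^*\bar\eta\oplus p^*\eta)^{\oplus k_1}\oplus p^*\bar\eta\oplus(\bar\gamma\otimes p^*\eta)\oplus(\bar\gamma\oplus\gamma)^{\oplus k_2}\oplus\gamma .$$ Its cohomology ring is $\mathbb Z[u,v]/(u^{n_1+1},v^{n_2+1}-uv^{n_2})$ with $u=c_1(p^*\bar\eta)$, $v=c_1(\bar\gamma)$, $\langle u^{n_1}v^{n_2},[\widetilde L]\rangle=1$. For a stably complex manifold of real dimension $2n$, $s_n[M]=\langle s_n(\mathcal TM),[M]\rangle$ where $s_n$ is the Chern-class polynomial corresponding to the power sum $t_1^n+\cdots+t_n^n$. *)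

theory Defs
  imports "HOL-Computational_Algebra.Polynomial"
begin

text \<open>Integral cohomology of L(n1,n2) is modelled as the quotient of
  Z[u,v] by the ideal (u^(n1+1), v^(n2+1) - u v^n2).  Polynomials in u,v are
  represented as int poly poly: outer variable v, coefficients in Z[u].\<close>

definition cls_u :: "int poly poly" where
  "cls_u = [: [:0, 1:] :]"

definition cls_v :: "int poly poly" where
  "cls_v = [:0, 1:]"

text \<open>Pairing with the fundamental class: a Z-linear functional on Z[u,v]
  vanishing on the defining ideal of the cohomology ring and with
  value 1 on u^n1 v^n2.\<close>

definition fundamental_pairing :: "nat \<Rightarrow> nat \<Rightarrow> (int poly poly \<Rightarrow> int) \<Rightarrow> bool" where
  "fundamental_pairing n1 n2 ev \<longleftrightarrow>
     (\<forall>p q. ev (p + q) = ev p + ev q) \<and>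
     (\<forall>a. ev (a * cls_u ^ (n1 + 1)) = 0) \<and>
     (\<forall>b. ev (b * (cls_v ^ (n2 + 1) - cls_u * cls_v ^ n2)) = 0) \<and>
     ev (cls_u ^ n1 * cls_v ^ n2) = 1"

text \<open>First Chern classes of the complex line bundles in the splitting
  of the stable tangent bundle of the stably complex manifold tilde-L(2 k1, 2 k2 + 1):
  (p*bar eta + p*eta)^k1 + p*bar eta + (bar gamma tensor p*eta) + (bar gamma + gamma)^k2 + gamma.
  c1(p*bar eta) = u, c1(p*eta) = -u, c1(bar gamma) = v, c1(gamma) = -v,
  c1(bar gamma tensor p*eta) = v - u.\<close>

definition chern_roots_Ltilde :: "nat \<Rightarrow> nat \<Rightarrow> int poly poly list" where
  "chern_roots_Ltilde k1 k2 =
     concat (replicate k1 [cls_u, - cls_u]) @ [cls_u] @ [cls_v - cls_u]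
     @ concat (replicate k2 [cls_v, - cls_v]) @ [- cls_v]"

text \<open>s_n of a sum of line bundles (splitting principle): power sum of the
  first Chern classes.\<close>

definition s_class :: "nat \<Rightarrow> int poly poly list \<Rightarrow> int poly poly" where
  "s_class n roots = sum_list (map (\<lambda>x. x ^ n) roots)"

end

theory Submission
  imports Defs
begin

text \<open>For odd N = n1 + n2 the Chern roots cancel in pairs x, -x, leaving
  s_N = u^N + (v - u)^N - v^N.  A top-degree monomial u^j v^(N-j) pairs to 1 if j \<le> n1,
  since the relation v^(n2+1) = u v^n2 trades the surplus powers of v for powers of u, and
  to 0 otherwise because u^(n1+1) = 0.  Expanding (v - u)^N binomially thus gives the
  alternating sum over 0 \<le> j \<le> n1, whose j = 0 term cancels against v^N, while u^N
  pairs to 0.\<close>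

lemma sum_list_power_pairs_odd:
  fixes a :: "'a::comm_ring_1"
  assumes "odd n"
  shows "(\<Sum>x\<leftarrow>concat (replicate k [a, - a]). x ^ n) = 0"
  using assms by (induction k) (auto simp: power_minus_odd)

lemma s_class_chern_roots_Ltilde:
  assumes "odd n"
  shows "s_class n (chern_roots_Ltilde k1 k2) = cls_u ^ n + (cls_v - cls_u) ^ n - cls_v ^ n"
  using assms unfolding s_class_def chern_roots_Ltilde_def
  by (simp add: sum_list_power_pairs_odd power_minus_odd)

lemma additive_of_int_mult:
  fixes f :: "'a::ring_1 \<Rightarrow> 'b::ring_1"
  assumes "additive f"
  shows "f (of_int c * x) = of_int c * f x"
proof -
  interpret additive f by fact
  have of_nat_mult: "f (of_nat n * x) = of_nat n * f x" for n
    using sum[of "\<lambda>_. x" "{..<n}"] by simp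
  show ?thesis
  proof (cases c rule: int_cases)
    case (nonneg n)
    then show ?thesis using of_nat_mult by simp
  next
    case (neg n)
    then have "of_int c * x = - (of_nat (Suc n) * x)"
      by (simp only: of_int_minus of_int_of_nat_eq mult_minus_left)
    then have "f (of_int c * x) = - (of_nat (Suc n) * f x)"
      by (simp only: minus of_nat_mult)
    then show ?thesis
      using neg by (simp only: of_int_minus of_int_of_nat_eq mult_minus_left)
  qed
qed

lemma fundamental_pairing_additive:
  "fundamental_pairing n1 n2 ev \<Longrightarrow> additive ev"
  unfolding fundamental_pairing_def additive_def by blast

lemma fundamental_pairing_high_u_power:
  assumes "fundamental_pairing n1 n2 ev" and "n1 < m"
  shows "ev (a * cls_u ^ m) = 0"
proof -
  have "m = (m - n1 - 1) + (n1 + 1)"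
    using \<open>n1 < m\<close> by simp
  then have "a * cls_u ^ m = (a * cls_u ^ (m - n1 - 1)) * cls_u ^ (n1 + 1)"
    by (metis power_add mult.assoc)
  then show ?thesis
    using assms(1) unfolding fundamental_pairing_def by metis
qed

lemma fundamental_pairing_shift_v_to_u:
  assumes "fundamental_pairing n1 n2 ev"
  shows "ev (cls_u ^ j * cls_v ^ (n2 + t)) = ev (cls_u ^ (j + t) * cls_v ^ n2)"
proof (induction t arbitrary: j)
  case 0
  then show ?case by simp
next
  case (Suc t)
  interpret additive ev
    using assms by (rule fundamental_pairing_additive)
  let ?a = "cls_u ^ j * cls_v ^ t"
  have "ev (?a * (cls_v ^ (n2 + 1) - cls_u * cls_v ^ n2)) = 0"
    using assms unfolding fundamental_pairing_def by blast
  then have "ev (?a * cls_v ^ (n2 + 1)) = ev (?a * (cls_u * cls_v ^ n2))"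
    by (simp only: right_diff_distrib diff)
  moreover have "?a * cls_v ^ (n2 + 1) = cls_u ^ j * cls_v ^ (n2 + Suc t)"
    and "?a * (cls_u * cls_v ^ n2) = cls_u ^ Suc j * cls_v ^ (n2 + t)"
    by (simp_all only: power_add power_Suc power_one_right mult_ac add_Suc_right)
  ultimately have "ev (cls_u ^ j * cls_v ^ (n2 + Suc t)) = ev (cls_u ^ Suc j * cls_v ^ (n2 + t))"
    by metis
  also have "\<dots> = ev (cls_u ^ (j + Suc t) * cls_v ^ n2)"
    using Suc.IH[of "Suc j"] by simp
  finally show ?case .
qed

lemma fundamental_pairing_top_monomial:
  assumes "fundamental_pairing n1 n2 ev"
  shows "ev (cls_u ^ j * cls_v ^ (n1 + n2 - j)) = (if j \<le> n1 then 1 else 0)"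
proof (cases "j \<le> n1")
  case True
  then have "n1 + n2 - j = n2 + (n1 - j)" by simp
  with True assms show ?thesis
    using fundamental_pairing_shift_v_to_u[OF assms, of j "n1 - j"]
    unfolding fundamental_pairing_def by simp
next
  case False
  then show ?thesis
    using fundamental_pairing_high_u_power[OF assms, of j "cls_v ^ (n1 + n2 - j)"]
    by (simp add: mult.commute)
qed

lemma fundamental_pairing_binomial:
  assumes "fundamental_pairing n1 n2 ev"
  shows "ev ((cls_v - cls_u) ^ (n1 + n2)) = (\<Sum>j\<le>n1. (-1) ^ j * int ((n1 + n2) choose j))"
proof -
  define N where "N = n1 + n2"
  interpret additive ev
    using assms by (rule fundamental_pairing_additive)
  have binomial_expansion: "(cls_v - cls_u) ^ N
      = (\<Sum>j\<le>N. of_int ((-1) ^ j * int (N choose j)) * (cls_u ^ j * cls_v ^ (N - j)))"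
    unfolding diff_conv_add_uminus binomial_ring add.commute[of cls_v]
    by (rule sum.cong) (auto simp: power_minus' algebra_simps)
  have "ev ((cls_v - cls_u) ^ N)
      = (\<Sum>j\<le>N. (-1) ^ j * int (N choose j) * (if j \<le> n1 then 1 else 0))"
    unfolding binomial_expansion sum
    by (rule sum.cong) (simp_all only: additive_of_int_mult[OF additive_axioms]
        fundamental_pairing_top_monomial[OF assms, folded N_def] of_int_eq_id id_def)
  also have "\<dots> = (\<Sum>j\<le>n1. (-1) ^ j * int (N choose j))"
    by (rule sum.mono_neutral_cong_right) (auto simp: N_def)
  finally show ?thesis
    unfolding N_def .
qed

theorem lemma10p1:
  fixes n1 n2 k1 k2 :: nat and ev :: "int poly poly \<Rightarrow> int"
  assumes "n1 = 2 * k1" and "n2 = 2 * k2 + 1" and "n1 > 0" and "n2 > 0"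
    and "fundamental_pairing n1 n2 ev"
  shows "ev (s_class (n1 + n2) (chern_roots_Ltilde k1 k2))
           = (\<Sum>j = 1..n1. (-1) ^ j * int ((n1 + n2) choose j))"
proof -
  interpret additive ev
    using assms(5) by (rule fundamental_pairing_additive)
  have "odd (n1 + n2)"
    using assms(1,2) by simp
  moreover have "ev (cls_u ^ (n1 + n2)) = 0"
    using fundamental_pairing_top_monomial[OF assms(5), of "n1 + n2"] assms(4) by simp
  moreover have "ev (cls_v ^ (n1 + n2)) = 1"
    using fundamental_pairing_top_monomial[OF assms(5), of 0] by simp
  ultimately show ?thesis
    using fundamental_pairing_binomial[OF assms(5)]
    by (simp add: s_class_chern_roots_Ltilde add diff atMost_atLeast0 sum.atLeast_Suc_atMost)
qed

end
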